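(* Let $T$ be an almost reduced linear trellis with $C(T)=C$. If $T$ is mergeable, then by merging vertices of $T$ one obtains a linear trellis $T'$ with $C(T')=C$ that is smaller than $T$.
   Context: Let $\mathbb{F}$ be a finite field and $n\ge1$; indices are taken in $\mathbb{Z}_n$. A trellis $T$ of length $n$ over $\mathbb{F}$ consists of pairwise disjoint finite vertex sets $V_i(T)$, $i\in\mathbb{Z}_n$, and edge sets $E_i(T)\subseteq V_i(T)\times\mathbb{F}\times V_{i+1}(T)$; $(v,\alpha,w)\in E_i(T)$ is an edge from $v$ to $w$ with label $\alpha$. Trellises are trim (each vertex has an outgoing and an incoming edge). $T$ is linear if each $V_i(T)$ is an $\mathbb{F}$-vector space and each $E_i(T)$ a subspace of $V_i(T)\times\mathbb{F}\times V_{i+1}(T)$. A cycle is a closed path of length $n$ starting (and ending) at a vertex of $V_0(T)$; $C(T)\subseteq\mathbb{F}^n$ is the set of label sequences of cycles. $T$ is almost reduced if every vertex lies on some cycle. Merging two vertices $v\ne w$ of the same $V_i(T)$ means identifying them into one vertex (keeping all edges). $T$ is mergeable if there exist $i$ and $v\ne w\in V_i(T)$ such that the trellis obtained by merging $v$ and $w$ represents the same code as $T$. A trellis $T'$ of length $n$ is smaller than $T$ if $|V_i(T')|\le|V_i(T)|$ for all $i$ with at least one strict inequality. *)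

theory Defs
  imports Main
begin

text \<open>A trellis of length n is given by vertex sets V i and edge sets E i for i < n
  (indices in Z_n are represented by 0..n-1, with successor Suc i mod n).\<close>

definition trellis :: "nat \<Rightarrow> (nat \<Rightarrow> 'v set) \<Rightarrow> (nat \<Rightarrow> ('v \<times> 'a \<times> 'v) set) \<Rightarrow> bool" where
  "trellis n V E \<longleftrightarrow> n \<ge> 1
     \<and> (\<forall>i<n. finite (V i))
     \<and> (\<forall>i<n. \<forall>j<n. i \<noteq> j \<longrightarrow> V i \<inter> V j = {})
     \<and> (\<forall>i<n. E i \<subseteq> V i \<times> UNIV \<times> V (Suc i mod n))
     \<and> (\<forall>i<n. \<forall>v\<in>V i. (\<exists>a w. (v, a, w) \<in> E i)
                      \<and> (\<exists>u a. (u, a, v) \<in> E ((i + n - 1) mod n)))"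

definition vs_on :: "'v set \<Rightarrow> ('v \<Rightarrow> 'v \<Rightarrow> 'v) \<Rightarrow> ('a::field \<Rightarrow> 'v \<Rightarrow> 'v) \<Rightarrow> 'v \<Rightarrow> bool" where
  "vs_on A add sm z \<longleftrightarrow> z \<in> A
     \<and> (\<forall>x\<in>A. \<forall>y\<in>A. add x y \<in> A)
     \<and> (\<forall>c. \<forall>x\<in>A. sm c x \<in> A)
     \<and> (\<forall>x\<in>A. \<forall>y\<in>A. \<forall>u\<in>A. add (add x y) u = add x (add y u))
     \<and> (\<forall>x\<in>A. \<forall>y\<in>A. add x y = add y x)
     \<and> (\<forall>x\<in>A. add z x = x)
     \<and> (\<forall>x\<in>A. \<exists>y\<in>A. add x y = z)
     \<and> (\<forall>c. \<forall>x\<in>A. \<forall>y\<in>A. sm c (add x y) = add (sm c x) (sm c y))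
     \<and> (\<forall>c d. \<forall>x\<in>A. sm (c + d) x = add (sm c x) (sm d x))
     \<and> (\<forall>c d. \<forall>x\<in>A. sm (c * d) x = sm c (sm d x))
     \<and> (\<forall>x\<in>A. sm 1 x = x)"

definition linear_trellis :: "nat \<Rightarrow> (nat \<Rightarrow> 'v set) \<Rightarrow> (nat \<Rightarrow> ('v \<times> 'a::field \<times> 'v) set) \<Rightarrow> bool" where
  "linear_trellis n V E \<longleftrightarrow> trellis n V E \<and>
     (\<exists>(add :: nat \<Rightarrow> 'v \<Rightarrow> 'v \<Rightarrow> 'v) (sm :: nat \<Rightarrow> 'a \<Rightarrow> 'v \<Rightarrow> 'v) (z :: nat \<Rightarrow> 'v).
        \<forall>i<n. vs_on (V i) (add i) (sm i) (z i)
          \<and> (z i, 0, z (Suc i mod n)) \<in> E i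
          \<and> (\<forall>v a w v' a' w'. (v, a, w) \<in> E i \<longrightarrow> (v', a', w') \<in> E i \<longrightarrow>
                (add i v v', a + a', add (Suc i mod n) w w') \<in> E i)
          \<and> (\<forall>c v a w. (v, a, w) \<in> E i \<longrightarrow>
                (sm i c v, c * a, sm (Suc i mod n) c w) \<in> E i))"

definition is_cycle :: "nat \<Rightarrow> (nat \<Rightarrow> ('v \<times> 'a \<times> 'v) set) \<Rightarrow> 'v list \<Rightarrow> 'a list \<Rightarrow> bool" where
  "is_cycle n E vs c \<longleftrightarrow> length vs = n \<and> length c = n
     \<and> (\<forall>j<n. (vs ! j, c ! j, vs ! (Suc j mod n)) \<in> E j)"

definition code :: "nat \<Rightarrow> (nat \<Rightarrow> ('v \<times> 'a \<times> 'v) set) \<Rightarrow> 'a list set" where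
  "code n E = {c. \<exists>vs. is_cycle n E vs c}"

definition almost_reduced :: "nat \<Rightarrow> (nat \<Rightarrow> 'v set) \<Rightarrow> (nat \<Rightarrow> ('v \<times> 'a \<times> 'v) set) \<Rightarrow> bool" where
  "almost_reduced n V E \<longleftrightarrow> (\<forall>i<n. \<forall>v\<in>V i. \<exists>vs c. is_cycle n E vs c \<and> vs ! i = v)"

definition merge_vertices :: "(nat \<Rightarrow> 'v set) \<Rightarrow> (nat \<Rightarrow> ('v \<times> 'a \<times> 'v) set) \<Rightarrow> 'v \<Rightarrow> 'v
     \<Rightarrow> (nat \<Rightarrow> 'v set) \<times> (nat \<Rightarrow> ('v \<times> 'a \<times> 'v) set)" where
  "merge_vertices V E v w =
     (let f = (\<lambda>x. if x = v then w else x)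
      in (\<lambda>j. f ` V j, \<lambda>j. (\<lambda>(x, a, y). (f x, a, f y)) ` E j))"

definition mergeable :: "nat \<Rightarrow> (nat \<Rightarrow> 'v set) \<Rightarrow> (nat \<Rightarrow> ('v \<times> 'a \<times> 'v) set) \<Rightarrow> bool" where
  "mergeable n V E \<longleftrightarrow> (\<exists>i<n. \<exists>v\<in>V i. \<exists>w\<in>V i. v \<noteq> w \<and>
      code n (snd (merge_vertices V E v w)) = code n E)"

definition merge_step :: "nat \<Rightarrow> (nat \<Rightarrow> 'v set) \<times> (nat \<Rightarrow> ('v \<times> 'a \<times> 'v) set)
     \<Rightarrow> (nat \<Rightarrow> 'v set) \<times> (nat \<Rightarrow> ('v \<times> 'a \<times> 'v) set) \<Rightarrow> bool" where
  "merge_step n T T' \<longleftrightarrow> (\<exists>i<n. \<exists>v\<in>fst T i. \<exists>w\<in>fst T i. v \<noteq> w \<and>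
      T' = merge_vertices (fst T) (snd T) v w)"

definition smaller :: "nat \<Rightarrow> (nat \<Rightarrow> 'v set) \<Rightarrow> (nat \<Rightarrow> 'w set) \<Rightarrow> bool" where
  "smaller n V' V \<longleftrightarrow> (\<forall>i<n. card (V' i) \<le> card (V i)) \<and> (\<exists>i<n. card (V' i) < card (V i))"

end

theory Submission
  imports Defs
begin

text \<open>
  Let \<open>T\<close> be almost reduced and linear, and suppose merging \<open>v \<noteq> w\<close> in \<open>V i\<close>
  keeps the code. Put \<open>delta = v - w\<close> and collapse every vertex of \<open>V i\<close> to a chosen
  representative of its coset modulo the line \<open>F delta\<close> (all other vertices stay). The
  collapsed trellis is linear because cosets respect the vector operations; it is smaller
  because \<open>v\<close> and \<open>w\<close> get identified; and it arises from \<open>T\<close> by merging vertices one at a time.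
  For the code: a cycle of the collapsed trellis lifts to a "twisted" cycle of \<open>T\<close> that arrives
  at \<open>x + k delta\<close> instead of \<open>x\<close> in \<open>V i\<close>. Twisted cycles form a vector space; after scaling to
  \<open>k = 1\<close> and adding a cycle through \<open>w - x\<close> (which exists since \<open>T\<close> is almost reduced) one gets
  a twisted cycle from \<open>w\<close> to \<open>v\<close>, i.e. a cycle of the merged trellis, whose label is a codeword
  by assumption; linearity of the code then recovers the original label.
\<close>

locale vs_structure =
  fixes A :: "'v set"
    and vadd :: "'v \<Rightarrow> 'v \<Rightarrow> 'v"
    and vscale :: "'a::field \<Rightarrow> 'v \<Rightarrow> 'v"
    and vzero :: 'v
  assumes vs: "vs_on A vadd vscale vzero"
begin

lemma zero_closed: "vzero \<in> A"
  using vs unfolding vs_on_def by meson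

lemma plus_closed: "x \<in> A \<Longrightarrow> y \<in> A \<Longrightarrow> vadd x y \<in> A"
  using vs unfolding vs_on_def by meson

lemma scale_closed: "x \<in> A \<Longrightarrow> vscale c x \<in> A"
  using vs unfolding vs_on_def by meson

lemma plus_assoc: "x \<in> A \<Longrightarrow> y \<in> A \<Longrightarrow> u \<in> A \<Longrightarrow> vadd (vadd x y) u = vadd x (vadd y u)"
  using vs unfolding vs_on_def by meson

lemma plus_comm: "x \<in> A \<Longrightarrow> y \<in> A \<Longrightarrow> vadd x y = vadd y x"
  using vs unfolding vs_on_def by meson

lemma zero_plus: "x \<in> A \<Longrightarrow> vadd vzero x = x"
  using vs unfolding vs_on_def by meson

lemma plus_inverse: "x \<in> A \<Longrightarrow> \<exists>y\<in>A. vadd x y = vzero"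
  using vs unfolding vs_on_def by meson

lemma scale_plus: "x \<in> A \<Longrightarrow> y \<in> A \<Longrightarrow> vscale c (vadd x y) = vadd (vscale c x) (vscale c y)"
  using vs unfolding vs_on_def by meson

lemma plus_scale: "x \<in> A \<Longrightarrow> vscale (c + c') x = vadd (vscale c x) (vscale c' x)"
  using vs unfolding vs_on_def by meson

lemma scale_scale: "x \<in> A \<Longrightarrow> vscale (c * c') x = vscale c (vscale c' x)"
  using vs unfolding vs_on_def by meson

lemma scale_one: "x \<in> A \<Longrightarrow> vscale 1 x = x"
  using vs unfolding vs_on_def by meson

lemma plus_zero: "x \<in> A \<Longrightarrow> vadd x vzero = x"
  using plus_comm[OF _ zero_closed] zero_plus by simp

lemma scale_zero:
  assumes x: "x \<in> A" shows "vscale 0 x = vzero"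
proof -
  let ?t = "vscale 0 x"
  have t: "?t \<in> A" using scale_closed x .
  have idem: "vadd ?t ?t = ?t" using plus_scale[OF x, of 0 0] by simp
  obtain y where y: "y \<in> A" "vadd ?t y = vzero" using plus_inverse[OF t] by blast
  have "vzero = vadd (vadd ?t ?t) y" using y(2) by (simp add: idem)
  also have "\<dots> = vadd ?t (vadd ?t y)" using plus_assoc t y by blast
  also have "\<dots> = ?t" using y plus_zero t by simp
  finally show ?thesis by simp
qed

lemma plus_minus: "x \<in> A \<Longrightarrow> vadd x (vscale (-1) x) = vzero"
  using plus_scale[of x 1 "-1"] scale_one scale_zero by simp

lemma plus_minus_cancel:
  assumes w: "w \<in> A" and v: "v \<in> A"
  shows "vadd w (vadd v (vscale (-1) w)) = v"
proof -
  have "vadd w (vadd v (vscale (-1) w)) = vadd w (vadd (vscale (-1) w) v)"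
    using plus_comm v w scale_closed by simp
  also have "\<dots> = vadd (vadd w (vscale (-1) w)) v" using plus_assoc v w scale_closed by simp
  finally show ?thesis using plus_minus w zero_plus v by simp
qed

lemma plus_scaled: "x \<in> A \<Longrightarrow> d \<in> A \<Longrightarrow> vadd (vadd x (vscale k d)) (vscale k' d) = vadd x (vscale (k + k') d)"
  by (simp add: plus_assoc scale_closed plus_scale)

lemma plus_interchange:
  assumes "x \<in> A" "y \<in> A" "a \<in> A" "b \<in> A"
  shows "vadd (vadd x a) (vadd y b) = vadd (vadd x y) (vadd a b)"
proof -
  have "vadd (vadd x a) (vadd y b) = vadd x (vadd (vadd a y) b)"
    using assms by (simp add: plus_assoc plus_closed)
  also have "\<dots> = vadd x (vadd (vadd y a) b)" using assms plus_comm[of a y] by simp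
  finally show ?thesis using assms by (simp add: plus_assoc plus_closed)
qed

text \<open>Quotienting a vertex space by \<open>F d\<close> is what merging \<open>v\<close> with \<open>w\<close> does once \<open>d = v - w\<close>.\<close>
definition line_coset :: "'v \<Rightarrow> 'v \<Rightarrow> 'v set" where
  "line_coset d x = {y. \<exists>k. y = vadd x (vscale k d)}"

definition rep :: "'v \<Rightarrow> 'v \<Rightarrow> 'v" where
  "rep d x = (SOME y. y \<in> line_coset d x)"

lemma coset_self:
  assumes "x \<in> A" "d \<in> A" shows "x \<in> line_coset d x"
proof -
  have "x = vadd x (vscale 0 d)" using assms scale_zero plus_zero by simp
  then show ?thesis unfolding line_coset_def by blast
qed

lemma coset_closed: "x \<in> A \<Longrightarrow> d \<in> A \<Longrightarrow> y \<in> line_coset d x \<Longrightarrow> y \<in> A"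
  unfolding line_coset_def using plus_closed scale_closed by blast

lemma coset_eq:
  assumes x: "x \<in> A" and d: "d \<in> A" and y: "y \<in> line_coset d x"
  shows "line_coset d y = line_coset d x"
proof
  obtain k where k: "y = vadd x (vscale k d)" using y unfolding line_coset_def by blast
  show "line_coset d y \<subseteq> line_coset d x"
    unfolding line_coset_def using plus_scaled[OF x d] k by auto
  show "line_coset d x \<subseteq> line_coset d y"
  proof
    fix u assume "u \<in> line_coset d x"
    then obtain k' where k': "u = vadd x (vscale k' d)" unfolding line_coset_def by blast
    have "vadd y (vscale (k' - k) d) = u" using plus_scaled[OF x d, of k "k' - k"] k k' by simp
    then show "u \<in> line_coset d y" unfolding line_coset_def by blast
  qed
qed

lemma coset_plus:
  assumes "a \<in> A" "b \<in> A" "d \<in> A" "a' \<in> line_coset d a" "b' \<in> line_coset d b"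
  shows "vadd a' b' \<in> line_coset d (vadd a b)"
proof -
  obtain k k' where "a' = vadd a (vscale k d)" "b' = vadd b (vscale k' d)"
    using assms unfolding line_coset_def by blast
  then have "vadd a' b' = vadd (vadd a b) (vadd (vscale k d) (vscale k' d))"
    using plus_interchange[of a b "vscale k d" "vscale k' d"] assms scale_closed by simp
  also have "\<dots> = vadd (vadd a b) (vscale (k + k') d)" using plus_scale assms by simp
  finally show ?thesis unfolding line_coset_def by blast
qed

lemma coset_scale:
  assumes "a \<in> A" "d \<in> A" "a' \<in> line_coset d a"
  shows "vscale c a' \<in> line_coset d (vscale c a)"
proof -
  obtain k where "a' = vadd a (vscale k d)" using assms unfolding line_coset_def by blast
  then have "vscale c a' = vadd (vscale c a) (vscale (c * k) d)"
    using scale_plus assms scale_closed scale_scale by simp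
  then show ?thesis unfolding line_coset_def by blast
qed

lemma rep_in_coset: "x \<in> A \<Longrightarrow> d \<in> A \<Longrightarrow> rep d x \<in> line_coset d x"
  unfolding rep_def by (rule someI) (rule coset_self)

lemma rep_closed: "x \<in> A \<Longrightarrow> d \<in> A \<Longrightarrow> rep d x \<in> A"
  using rep_in_coset coset_closed by metis

lemma rep_eq:
  assumes "x \<in> A" "d \<in> A" "y \<in> line_coset d x" shows "rep d y = rep d x"
  unfolding rep_def using coset_eq[OF assms] by simp

lemma rep_idem: assumes "x \<in> A" "d \<in> A" shows "rep d (rep d x) = rep d x"
  by (rule rep_eq[OF assms rep_in_coset[OF assms]])

lemma rep_eq_imp_coset:
  assumes x: "x \<in> A" and y: "y \<in> A" and d: "d \<in> A" and eq: "rep d x = rep d y"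
  shows "y \<in> line_coset d x"
proof -
  have "line_coset d x = line_coset d (rep d x)" using coset_eq[OF x d rep_in_coset[OF x d]] ..
  also have "\<dots> = line_coset d y" using coset_eq[OF y d rep_in_coset[OF y d]] eq by simp
  finally show ?thesis using coset_self[OF y d] by simp
qed

end

lemma vs_on_image:
  assumes vs: "vs_on A vadd vscale vzero"
    and hom_plus: "\<And>a b. a \<in> A \<Longrightarrow> b \<in> A \<Longrightarrow> vadd' (g a) (g b) = g (vadd a b)"
    and hom_scale: "\<And>c a. a \<in> A \<Longrightarrow> vscale' c (g a) = g (vscale c a)"
    and hom_zero: "vzero' = g vzero"
  shows "vs_on (g ` A) vadd' vscale' vzero'"
proof -
  interpret vs_structure A vadd vscale vzero by (rule vs_structure.intro) (rule vs)
  show ?thesis unfolding vs_on_def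
  proof (intro conjI)
    show "vzero' \<in> g ` A" using hom_zero zero_closed by blast
    show "\<forall>x\<in>g ` A. \<forall>y\<in>g ` A. vadd' x y \<in> g ` A"
      by (auto simp: hom_plus plus_closed)
    show "\<forall>c. \<forall>x\<in>g ` A. vscale' c x \<in> g ` A"
      by (auto simp: hom_scale scale_closed)
    show "\<forall>x\<in>g ` A. \<forall>y\<in>g ` A. \<forall>u\<in>g ` A. vadd' (vadd' x y) u = vadd' x (vadd' y u)"
      by (auto simp: hom_plus plus_closed plus_assoc)
    show "\<forall>x\<in>g ` A. \<forall>y\<in>g ` A. vadd' x y = vadd' y x"
      using hom_plus plus_comm by auto
    show "\<forall>x\<in>g ` A. vadd' vzero' x = x"
      using hom_plus hom_zero zero_closed zero_plus by auto
    show "\<forall>x\<in>g ` A. \<exists>y\<in>g ` A. vadd' x y = vzero'"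
    proof
      fix x assume "x \<in> g ` A"
      then obtain a where a: "a \<in> A" "x = g a" by blast
      obtain b where b: "b \<in> A" "vadd a b = vzero" using plus_inverse[OF a(1)] by blast
      have "vadd' x (g b) = vzero'" using a b hom_plus hom_zero by simp
      then show "\<exists>y\<in>g ` A. vadd' x y = vzero'" using b(1) by blast
    qed
    show "\<forall>c. \<forall>x\<in>g ` A. \<forall>y\<in>g ` A. vscale' c (vadd' x y) = vadd' (vscale' c x) (vscale' c y)"
      by (auto simp: hom_plus hom_scale plus_closed scale_closed scale_plus)
    show "\<forall>c c'. \<forall>x\<in>g ` A. vscale' (c + c') x = vadd' (vscale' c x) (vscale' c' x)"
      by (auto simp: hom_plus hom_scale scale_closed plus_scale)
    show "\<forall>c c'. \<forall>x\<in>g ` A. vscale' (c * c') x = vscale' c (vscale' c' x)"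
      by (auto simp: hom_scale scale_closed scale_scale)
    show "\<forall>x\<in>g ` A. vscale' 1 x = x"
      by (auto simp: hom_scale scale_one)
  qed
qed

definition map_edge :: "('v \<Rightarrow> 'v) \<Rightarrow> 'v \<times> 'a \<times> 'v \<Rightarrow> 'v \<times> 'a \<times> 'v" where
  "map_edge f = (\<lambda>(x, a, y). (f x, a, f y))"

lemma map_edge_memI: "(x, a, y) \<in> F \<Longrightarrow> (f x, a, f y) \<in> map_edge f ` F"
  unfolding map_edge_def by (rule image_eqI[where x = "(x, a, y)"]) auto

lemma map_edge_memE: "(x', a, y') \<in> map_edge f ` F \<Longrightarrow> \<exists>x y. (x, a, y) \<in> F \<and> x' = f x \<and> y' = f y"
  unfolding map_edge_def by auto

lemma map_edge_comp: "map_edge f \<circ> map_edge g = map_edge (f \<circ> g)"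
  unfolding map_edge_def by auto

lemma map_edge_id: "map_edge (\<lambda>x. x) ` F = F"
  unfolding map_edge_def by (simp add: case_prod_unfold)

lemma merge_vertices_map_edge:
  "merge_vertices V E v w = (\<lambda>j. (\<lambda>x. if x = v then w else x) ` V j,
     \<lambda>j. map_edge (\<lambda>x. if x = v then w else x) ` E j)"
  unfolding merge_vertices_def map_edge_def Let_def by simp

text \<open>Redirecting every vertex of a finite set \<open>S \<subseteq> V i\<close> to its image under a map \<open>r\<close> of
  \<open>V i\<close> into itself is a sequence of merges, provided \<open>S\<close> avoids the range of \<open>r\<close>: the
  vertices of \<open>S\<close> are merged one at a time into their images, which are never themselves
  redirected.\<close>
lemma merge_steps_redirect:
  assumes i: "i < n" and r_into: "\<forall>x\<in>V i. r x \<in> V i" and fin: "finite S"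
    and S: "S \<subseteq> V i - r ` V i"
  shows "(merge_step n)\<^sup>*\<^sup>* (V, E) (\<lambda>j. (\<lambda>x. if x \<in> S then r x else x) ` V j,
            \<lambda>j. map_edge (\<lambda>x. if x \<in> S then r x else x) ` E j)"
  using fin S
proof (induction S rule: finite_induct)
  case empty
  then show ?case by (simp add: map_edge_id)
next
  case (insert x S)
  define G where "G = (\<lambda>x. if x \<in> S then r x else x)"
  define T where "T = (\<lambda>j. G ` V j, \<lambda>j. map_edge G ` E j)"
  have steps: "(merge_step n)\<^sup>*\<^sup>* (V, E) T" using insert unfolding T_def G_def by auto
  have x: "x \<in> V i" "x \<notin> r ` V i" using insert.prems by auto
  have rx: "r x \<in> V i" "r x \<notin> S" using r_into x insert.prems by auto
  have "x \<in> fst T i" "r x \<in> fst T i"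
    unfolding T_def G_def using x rx insert.hyps(2) by (auto intro: image_eqI)
  then have step: "merge_step n T (merge_vertices (fst T) (snd T) x (r x))"
    unfolding merge_step_def using i x by blast
  have comp: "(\<lambda>y. if y = x then r x else y) \<circ> G = (\<lambda>y. if y \<in> insert x S then r y else y)"
    using insert.prems x insert.hyps(2) unfolding G_def by (force simp: fun_eq_iff)
  have "merge_vertices (fst T) (snd T) x (r x) =
     (\<lambda>j. (\<lambda>y. if y \<in> insert x S then r y else y) ` V j,
      \<lambda>j. map_edge (\<lambda>y. if y \<in> insert x S then r y else y) ` E j)"
    unfolding merge_vertices_map_edge T_def fst_conv snd_conv
    by (simp only: map_edge_comp image_comp comp)
  then show ?case using steps step by (metis rtranclp.rtrancl_into_rtrancl)
qed

locale mergeable_linear_trellis =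
  fixes n :: nat and V :: "nat \<Rightarrow> 'v set" and E :: "nat \<Rightarrow> ('v \<times> 'a::field \<times> 'v) set"
    and add :: "nat \<Rightarrow> 'v \<Rightarrow> 'v \<Rightarrow> 'v" and sm :: "nat \<Rightarrow> 'a \<Rightarrow> 'v \<Rightarrow> 'v" and z :: "nat \<Rightarrow> 'v"
    and i :: nat and v w :: 'v
  assumes trellis: "trellis n V E"
    and spaces: "\<And>j. j < n \<Longrightarrow> vs_on (V j) (add j) (sm j) (z j)"
    and edge_zero: "\<And>j. j < n \<Longrightarrow> (z j, 0, z (Suc j mod n)) \<in> E j"
    and edge_plus: "\<And>j x a y x' a' y'. j < n \<Longrightarrow> (x, a, y) \<in> E j \<Longrightarrow> (x', a', y') \<in> E j \<Longrightarrow>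
          (add j x x', a + a', add (Suc j mod n) y y') \<in> E j"
    and edge_scale: "\<And>j c x a y. j < n \<Longrightarrow> (x, a, y) \<in> E j \<Longrightarrow>
          (sm j c x, c * a, sm (Suc j mod n) c y) \<in> E j"
    and reduced: "almost_reduced n V E"
    and i: "i < n" and v: "v \<in> V i" and w: "w \<in> V i" and v_ne_w: "v \<noteq> w"
    and merge_code: "code n (snd (merge_vertices V E v w)) = code n E"
begin

lemma space: "j < n \<Longrightarrow> vs_structure (V j) (add j) (sm j) (z j)"
  using spaces by (rule vs_structure.intro)

sublocale Vi: vs_structure "V i" "add i" "sm i" "z i"
  using space i .

lemma edge_ends: "j < n \<Longrightarrow> (x, a, y) \<in> E j \<Longrightarrow> x \<in> V j \<and> y \<in> V (Suc j mod n)"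
  using trellis unfolding trellis_def by blast

lemma not_in_Vi: "j < n \<Longrightarrow> j \<noteq> i \<Longrightarrow> x \<in> V j \<Longrightarrow> x \<notin> V i"
  using trellis i unfolding trellis_def by blast

lemma finite_V: "j < n \<Longrightarrow> finite (V j)"
  using trellis unfolding trellis_def by blast

definition delta :: 'v where "delta = add i v (sm i (-1) w)"

lemma delta_in: "delta \<in> V i"
  unfolding delta_def using Vi.plus_closed Vi.scale_closed v w by blast

definition qrep :: "'v \<Rightarrow> 'v" where "qrep = Vi.rep delta"

definition collapse :: "'v \<Rightarrow> 'v" where "collapse x = (if x \<in> V i then qrep x else x)"

lemma qrep_closed: "x \<in> V i \<Longrightarrow> qrep x \<in> V i"
  unfolding qrep_def using Vi.rep_closed delta_in by blast

lemma qrep_eq: "x \<in> V i \<Longrightarrow> y \<in> Vi.line_coset delta x \<Longrightarrow> qrep y = qrep x"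
  unfolding qrep_def using Vi.rep_eq delta_in by blast

lemma collapse_Vi: "x \<in> V i \<Longrightarrow> collapse x = qrep x"
  unfolding collapse_def by simp

lemma collapse_other: "j < n \<Longrightarrow> j \<noteq> i \<Longrightarrow> x \<in> V j \<Longrightarrow> collapse x = x"
  unfolding collapse_def using not_in_Vi by auto

lemma collapse_closed: "j < n \<Longrightarrow> x \<in> V j \<Longrightarrow> collapse x \<in> V j"
  by (cases "j = i") (auto simp: collapse_Vi qrep_closed collapse_other)

definition QV :: "nat \<Rightarrow> 'v set" where "QV j = collapse ` V j"
definition QE :: "nat \<Rightarrow> ('v \<times> 'a \<times> 'v) set" where "QE j = map_edge collapse ` E j"

definition qadd :: "nat \<Rightarrow> 'v \<Rightarrow> 'v \<Rightarrow> 'v" where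
  "qadd j = (if j = i then (\<lambda>x y. qrep (add i x y)) else add j)"
definition qsm :: "nat \<Rightarrow> 'a \<Rightarrow> 'v \<Rightarrow> 'v" where
  "qsm j = (if j = i then (\<lambda>c x. qrep (sm i c x)) else sm j)"
definition qzero :: "nat \<Rightarrow> 'v" where
  "qzero j = (if j = i then qrep (z i) else z j)"

lemma collapse_plus:
  assumes j: "j < n" and x: "x \<in> V j" and y: "y \<in> V j"
  shows "qadd j (collapse x) (collapse y) = collapse (add j x y)"
proof (cases "j = i")
  case True
  then have xy: "x \<in> V i" "y \<in> V i" using x y by auto
  have "add i (qrep x) (qrep y) \<in> Vi.line_coset delta (add i x y)"
    unfolding qrep_def by (rule Vi.coset_plus) (use xy delta_in Vi.rep_in_coset in auto)
  then have "qrep (add i (qrep x) (qrep y)) = qrep (add i x y)"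
    using qrep_eq Vi.plus_closed xy by blast
  then show ?thesis using True xy Vi.plus_closed by (simp add: qadd_def collapse_Vi)
next
  case False
  then show ?thesis
    using j x y vs_structure.plus_closed[OF space[OF j]] by (simp add: qadd_def collapse_other)
qed

lemma collapse_scale:
  assumes j: "j < n" and x: "x \<in> V j"
  shows "qsm j c (collapse x) = collapse (sm j c x)"
proof (cases "j = i")
  case True
  then have x: "x \<in> V i" using x by auto
  have "sm i c (qrep x) \<in> Vi.line_coset delta (sm i c x)"
    unfolding qrep_def by (rule Vi.coset_scale) (use x delta_in Vi.rep_in_coset in auto)
  then have "qrep (sm i c (qrep x)) = qrep (sm i c x)"
    using qrep_eq Vi.scale_closed x by blast
  then show ?thesis using True x Vi.scale_closed by (simp add: qsm_def collapse_Vi)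
next
  case False
  then show ?thesis
    using j x vs_structure.scale_closed[OF space[OF j]] by (simp add: qsm_def collapse_other)
qed

lemma collapse_zero: "j < n \<Longrightarrow> qzero j = collapse (z j)"
  using vs_structure.zero_closed[OF space] by (cases "j = i") (auto simp: qzero_def collapse_Vi collapse_other)

lemma QV_subset: "j < n \<Longrightarrow> QV j \<subseteq> V j"
  unfolding QV_def using collapse_closed by blast

text \<open>Collapsing keeps the trellis axioms, since \<open>QV j \<subseteq> V j\<close> and edges are mapped edgewise.\<close>
lemma quotient_trellis: "trellis n QV QE"
  unfolding trellis_def
proof (intro conjI allI impI ballI)
  show "1 \<le> n" using trellis unfolding trellis_def by blast
  fix j assume j: "j < n"
  show "finite (QV j)" using finite_V[OF j] unfolding QV_def by simp
  show "QE j \<subseteq> QV j \<times> UNIV \<times> QV (Suc j mod n)"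
    unfolding QE_def QV_def map_edge_def using edge_ends[OF j] by auto
  show "QV j \<inter> QV k = {}" if "k < n" "j \<noteq> k" for k
    using QV_subset[OF j] QV_subset[OF that(1)] trellis j that unfolding trellis_def by blast
  fix x assume "x \<in> QV j"
  then obtain y where y: "y \<in> V j" "x = collapse y" unfolding QV_def by blast
  obtain a u where "(y, a, u) \<in> E j" using trellis j y(1) unfolding trellis_def by blast
  then have "(collapse y, a, collapse u) \<in> QE j" unfolding QE_def by (rule map_edge_memI)
  then show "\<exists>a u. (x, a, u) \<in> QE j" using y by blast
  obtain a u where "(u, a, y) \<in> E ((j + n - 1) mod n)" using trellis j y(1) unfolding trellis_def by blast
  then have "(collapse u, a, collapse y) \<in> QE ((j + n - 1) mod n)" unfolding QE_def by (rule map_edge_memI)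
  then show "\<exists>u a. (u, a, x) \<in> QE ((j + n - 1) mod n)" using y by blast
qed

lemma QE_plus:
  assumes j: "j < n" and e: "(x, a, y) \<in> QE j" and e': "(x', a', y') \<in> QE j"
  shows "(qadd j x x', a + a', qadd (Suc j mod n) y y') \<in> QE j"
proof -
  obtain p q p' q' where pq: "(p, a, q) \<in> E j" "x = collapse p" "y = collapse q"
    and pq': "(p', a', q') \<in> E j" "x' = collapse p'" "y' = collapse q'"
    using e e' unfolding QE_def by (metis map_edge_memE)
  have "qadd j x x' = collapse (add j p p')"
    using pq pq' edge_ends[OF j] collapse_plus[OF j] by simp
  moreover have "qadd (Suc j mod n) y y' = collapse (add (Suc j mod n) q q')"
    using pq pq' edge_ends[OF j] collapse_plus[of "Suc j mod n"] j by simp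
  ultimately show ?thesis
    unfolding QE_def using map_edge_memI[OF edge_plus[OF j pq(1) pq'(1)]] by simp
qed

lemma QE_scale:
  assumes j: "j < n" and e: "(x, a, y) \<in> QE j"
  shows "(qsm j c x, c * a, qsm (Suc j mod n) c y) \<in> QE j"
proof -
  obtain p q where pq: "(p, a, q) \<in> E j" "x = collapse p" "y = collapse q"
    using e unfolding QE_def by (metis map_edge_memE)
  have "qsm j c x = collapse (sm j c p)"
    using pq edge_ends[OF j] collapse_scale[OF j] by simp
  moreover have "qsm (Suc j mod n) c y = collapse (sm (Suc j mod n) c q)"
    using pq edge_ends[OF j] collapse_scale[of "Suc j mod n"] j by simp
  ultimately show ?thesis
    unfolding QE_def using map_edge_memI[OF edge_scale[OF j pq(1)]] by simp
qed

lemma quotient_linear: "linear_trellis n QV QE"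
  unfolding linear_trellis_def
proof (intro conjI exI allI impI)
  show "trellis n QV QE" by (rule quotient_trellis)
  fix j assume j: "j < n"
  show "vs_on (QV j) (qadd j) (qsm j) (qzero j)"
    unfolding QV_def
    by (rule vs_on_image[OF spaces[OF j]]) (use collapse_plus[OF j] collapse_scale[OF j] collapse_zero[OF j] in auto)
  show "(qzero j, 0, qzero (Suc j mod n)) \<in> QE j"
    using collapse_zero[OF j] collapse_zero[of "Suc j mod n"] j map_edge_memI[OF edge_zero[OF j]]
    unfolding QE_def by simp
qed (use QE_plus QE_scale in blast)+

end

context mergeable_linear_trellis
begin

text \<open>The unique edge section \<open>ip\<close> whose head lies in \<open>V i\<close>.\<close>
definition ip :: nat where "ip = (i + n - 1) mod n"

lemma ip_less: "ip < n"
  unfolding ip_def using i by simp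

lemma Suc_ip: "Suc ip mod n = i"
  unfolding ip_def using i by (cases i) (auto simp: mod_Suc)

lemma Suc_eq_i_imp: "j < n \<Longrightarrow> Suc j mod n = i \<Longrightarrow> j = ip"
  unfolding ip_def using i by (cases "Suc j = n") auto

text \<open>A \<open>k\<close>-twisted cycle with label \<open>c\<close>: edges \<open>x j \<rightarrow> y j\<close> labelled \<open>c ! j\<close> that fit together
  at every vertex except the one in \<open>V i\<close>, where the path arrives at \<open>x i + k delta\<close> instead
  of \<open>x i\<close>. These are exactly the cycles of the collapsed trellis, lifted to \<open>T\<close>; they are
  closed under addition and scaling, and \<open>0\<close>-twisted cycles are ordinary cycles.\<close>
definition twisted_cycle :: "'a \<Rightarrow> 'a list \<Rightarrow> (nat \<Rightarrow> 'v) \<Rightarrow> (nat \<Rightarrow> 'v) \<Rightarrow> bool" where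
  "twisted_cycle k c x y \<longleftrightarrow> length c = n \<and> (\<forall>j<n. (x j, c ! j, y j) \<in> E j)
     \<and> (\<forall>j<n. j \<noteq> ip \<longrightarrow> y j = x (Suc j mod n)) \<and> y ip = add i (x i) (sm i k delta)"

lemma twisted_start: "twisted_cycle k c x y \<Longrightarrow> x i \<in> V i"
  unfolding twisted_cycle_def using edge_ends i by blast

lemma twisted_plus:
  assumes T: "twisted_cycle k c x y" and T': "twisted_cycle k' c' x' y'"
  shows "twisted_cycle (k + k') (map2 (+) c c') (\<lambda>j. add j (x j) (x' j))
           (\<lambda>j. add (Suc j mod n) (y j) (y' j))"
  unfolding twisted_cycle_def
proof (intro conjI allI impI)
  show "length (map2 (+) c c') = n" using T T' unfolding twisted_cycle_def by simp
  fix j assume j: "j < n"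
  show "(add j (x j) (x' j), map2 (+) c c' ! j, add (Suc j mod n) (y j) (y' j)) \<in> E j"
    using edge_plus[OF j] T T' j unfolding twisted_cycle_def by simp
  assume "j \<noteq> ip"
  then show "add (Suc j mod n) (y j) (y' j) = add (Suc j mod n) (x (Suc j mod n)) (x' (Suc j mod n))"
    using T T' j unfolding twisted_cycle_def by simp
next
  have xi: "x i \<in> V i" "x' i \<in> V i" using twisted_start T T' by auto
  have "add (Suc ip mod n) (y ip) (y' ip)
      = add i (add i (x i) (sm i k delta)) (add i (x' i) (sm i k' delta))"
    using T T' Suc_ip unfolding twisted_cycle_def by simp
  also have "\<dots> = add i (add i (x i) (x' i)) (add i (sm i k delta) (sm i k' delta))"
    using Vi.plus_interchange xi Vi.scale_closed delta_in by blast
  also have "\<dots> = add i (add i (x i) (x' i)) (sm i (k + k') delta)"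
    using Vi.plus_scale delta_in by simp
  finally show "add (Suc ip mod n) (y ip) (y' ip) = add i (add i (x i) (x' i)) (sm i (k + k') delta)" .
qed

lemma twisted_scale:
  assumes T: "twisted_cycle k c x y"
  shows "twisted_cycle (a * k) (map ((*) a) c) (\<lambda>j. sm j a (x j)) (\<lambda>j. sm (Suc j mod n) a (y j))"
  unfolding twisted_cycle_def
proof (intro conjI allI impI)
  show "length (map ((*) a) c) = n" using T unfolding twisted_cycle_def by simp
  fix j assume j: "j < n"
  show "(sm j a (x j), map ((*) a) c ! j, sm (Suc j mod n) a (y j)) \<in> E j"
    using edge_scale[OF j] T j unfolding twisted_cycle_def by simp
  assume "j \<noteq> ip"
  then show "sm (Suc j mod n) a (y j) = sm (Suc j mod n) a (x (Suc j mod n))"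
    using T j unfolding twisted_cycle_def by simp
next
  have xi: "x i \<in> V i" using twisted_start T by auto
  have "sm (Suc ip mod n) a (y ip) = sm i a (add i (x i) (sm i k delta))"
    using T Suc_ip unfolding twisted_cycle_def by simp
  also have "\<dots> = add i (sm i a (x i)) (sm i (a * k) delta)"
    using Vi.scale_plus Vi.scale_scale xi Vi.scale_closed delta_in by simp
  finally show "sm (Suc ip mod n) a (y ip) = add i (sm i a (x i)) (sm i (a * k) delta)" .
qed

lemma cycle_twisted:
  assumes C: "is_cycle n E vs c"
  shows "twisted_cycle 0 c (\<lambda>j. vs ! j) (\<lambda>j. vs ! (Suc j mod n))"
proof -
  have "vs ! i \<in> V i" using C i edge_ends unfolding is_cycle_def by blast
  then show ?thesis
    using C Suc_ip Vi.scale_zero Vi.plus_zero delta_in unfolding twisted_cycle_def is_cycle_def by simp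
qed

lemma twisted_closes:
  assumes T: "twisted_cycle k c x y" and ends: "f (y ip) = f (x i)"
  shows "is_cycle n (\<lambda>j. map_edge f ` E j) (map (\<lambda>j. f (x j)) [0..<n]) c"
  unfolding is_cycle_def
proof (intro conjI allI impI)
  show "length (map (\<lambda>j. f (x j)) [0..<n]) = n" by simp
  show "length c = n" using T unfolding twisted_cycle_def by simp
  fix j assume j: "j < n"
  have "f (y j) = f (x (Suc j mod n))"
    using T j ends Suc_ip unfolding twisted_cycle_def by (cases "j = ip") auto
  moreover have "(f (x j), c ! j, f (y j)) \<in> map_edge f ` E j"
    using T j unfolding twisted_cycle_def by (blast intro: map_edge_memI)
  ultimately show "(map (\<lambda>j. f (x j)) [0..<n] ! j, c ! j, map (\<lambda>j. f (x j)) [0..<n] ! (Suc j mod n))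
       \<in> map_edge f ` E j"
    using j by simp
qed

lemma twisted_zero_code:
  assumes T: "twisted_cycle 0 c x y" shows "c \<in> code n E"
proof -
  have "y ip = x i"
    using T twisted_start[OF T] Vi.scale_zero Vi.plus_zero delta_in unfolding twisted_cycle_def by simp
  then have "is_cycle n (\<lambda>j. map_edge (\<lambda>x. x) ` E j) (map (\<lambda>j. x j) [0..<n]) c"
    using twisted_closes[OF T, of "\<lambda>x. x"] by simp
  then show ?thesis unfolding code_def map_edge_id by blast
qed

text \<open>A \<open>1\<close>-twisted cycle starting at \<open>w\<close> arrives at \<open>w + delta = v\<close>, so it closes up in the
  trellis where \<open>v\<close> and \<open>w\<close> are merged.\<close>
lemma twisted_one_merged:
  assumes T: "twisted_cycle 1 c x y" and xw: "x i = w"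
  shows "c \<in> code n (snd (merge_vertices V E v w))"
proof -
  have "y ip = v"
    using T xw Vi.scale_one delta_in Vi.plus_minus_cancel v w
    unfolding twisted_cycle_def delta_def by simp
  then have "is_cycle n (\<lambda>j. map_edge (\<lambda>x. if x = v then w else x) ` E j)
               (map (\<lambda>j. (\<lambda>x. if x = v then w else x) (x j)) [0..<n]) c"
    using twisted_closes[OF T, of "\<lambda>x. if x = v then w else x"] xw v_ne_w by simp
  then show ?thesis unfolding merge_vertices_map_edge code_def by auto
qed

lemma code_plus:
  assumes "c \<in> code n E" "c' \<in> code n E" shows "map2 (+) c c' \<in> code n E"
proof -
  obtain vs vs' where "is_cycle n E vs c" "is_cycle n E vs' c'" using assms unfolding code_def by blast
  from twisted_plus[OF cycle_twisted[OF this(1)] cycle_twisted[OF this(2)]]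
  show ?thesis using twisted_zero_code by simp
qed

lemma code_scale:
  assumes "c \<in> code n E" shows "map ((*) a) c \<in> code n E"
proof -
  obtain vs where "is_cycle n E vs c" using assms unfolding code_def by blast
  from twisted_scale[OF cycle_twisted[OF this], of a] show ?thesis using twisted_zero_code by simp
qed

end

context mergeable_linear_trellis
begin

text \<open>Since \<open>T\<close> is almost reduced there
  is a cycle through \<open>w - x i\<close>; adding it yields a \<open>1\<close>-twisted cycle starting at \<open>w\<close>, whose
  label is a codeword of the merged trellis and hence, by assumption, of \<open>T\<close>.\<close>
lemma twisted_one_code:
  assumes T: "twisted_cycle 1 c x y" shows "c \<in> code n E"
proof -
  have xi: "x i \<in> V i" using twisted_start[OF T] .
  define u where "u = add i w (sm i (-1) (x i))"
  have "u \<in> V i" unfolding u_def using Vi.plus_closed Vi.scale_closed xi w by blast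
  then obtain vs cz where cz: "is_cycle n E vs cz" "vs ! i = u"
    using reduced i unfolding almost_reduced_def by blast
  have sum: "twisted_cycle 1 (map2 (+) c cz) (\<lambda>j. add j (x j) (vs ! j))
               (\<lambda>j. add (Suc j mod n) (y j) (vs ! (Suc j mod n)))"
    using twisted_plus[OF T cycle_twisted[OF cz(1)]] by simp
  have "add i (x i) (vs ! i) = w" using cz(2) Vi.plus_minus_cancel xi w unfolding u_def by simp
  then have "map2 (+) c cz \<in> code n E"
    using twisted_one_merged[OF sum] merge_code by simp
  moreover have "cz \<in> code n E" using cz(1) unfolding code_def by blast
  ultimately have "map2 (+) (map2 (+) c cz) (map ((*) (-1)) cz) \<in> code n E"
    using code_plus code_scale by blast
  moreover have "map2 (+) (map2 (+) c cz) (map ((*) (-1)) cz) = c"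
    using T cz(1) unfolding twisted_cycle_def is_cycle_def by (intro nth_equalityI) auto
  ultimately show ?thesis by simp
qed

text \<open>Rescaling reduces any twist to the cases \<open>0\<close> and \<open>1\<close>.\<close>
lemma twisted_code:
  assumes T: "twisted_cycle k c x y" shows "c \<in> code n E"
proof (cases "k = 0")
  case True
  then show ?thesis using T twisted_zero_code by simp
next
  case False
  have "twisted_cycle 1 (map ((*) (inverse k)) c) (\<lambda>j. sm j (inverse k) (x j))
          (\<lambda>j. sm (Suc j mod n) (inverse k) (y j))"
    using twisted_scale[OF T, of "inverse k"] False by simp
  then have "map ((*) k) (map ((*) (inverse k)) c) \<in> code n E"
    using twisted_one_code code_scale by blast
  moreover have "map ((*) k) (map ((*) (inverse k)) c) = c"
    using False by (simp add: comp_def mult.assoc[symmetric])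
  ultimately show ?thesis by simp
qed

text \<open>A cycle of the collapsed trellis lifts edgewise to \<open>T\<close>; the lifted edges fit together
  except at \<open>V i\<close>, where the two lifts lie in the same coset of \<open>F delta\<close>.\<close>
lemma quotient_cycle_lifts:
  assumes C: "is_cycle n QE vs c" shows "\<exists>k x y. twisted_cycle k c x y"
proof -
  have "\<forall>j\<in>{..<n}. \<exists>p q. (p, c ! j, q) \<in> E j \<and> vs ! j = collapse p \<and> vs ! (Suc j mod n) = collapse q"
    using C unfolding is_cycle_def QE_def by (metis lessThan_iff map_edge_memE)
  then obtain x y where lift: "\<And>j. j < n \<Longrightarrow> (x j, c ! j, y j) \<in> E j
      \<and> vs ! j = collapse (x j) \<and> vs ! (Suc j mod n) = collapse (y j)"
    by (metis lessThan_iff)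
  have fit: "y j = x (Suc j mod n)" if j: "j < n" and "j \<noteq> ip" for j
  proof -
    have m: "Suc j mod n < n" "Suc j mod n \<noteq> i" using j \<open>j \<noteq> ip\<close> Suc_eq_i_imp by auto
    have "y j \<in> V (Suc j mod n)" "x (Suc j mod n) \<in> V (Suc j mod n)"
      using edge_ends lift j m(1) by blast+
    then show ?thesis using lift[OF j] lift[OF m(1)] collapse_other[OF m] by metis
  qed
  have ends: "y ip \<in> V i" "x i \<in> V i" using edge_ends lift ip_less Suc_ip i by metis+
  then have "qrep (x i) = qrep (y ip)" using lift[OF i] lift[OF ip_less] Suc_ip collapse_Vi by simp
  then have "y ip \<in> Vi.line_coset delta (x i)"
    using Vi.rep_eq_imp_coset ends delta_in unfolding qrep_def by blast
  then obtain k where "y ip = add i (x i) (sm i k delta)" unfolding Vi.line_coset_def by blast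
  moreover have "length c = n" using C unfolding is_cycle_def by simp
  ultimately have "twisted_cycle k c x y" unfolding twisted_cycle_def using lift fit by blast
  then show ?thesis by blast
qed

lemma cycle_collapses: "is_cycle n E vs c \<Longrightarrow> is_cycle n QE (map collapse vs) c"
  unfolding is_cycle_def QE_def by (auto intro: map_edge_memI)

lemma quotient_code: "code n QE = code n E"
proof
  show "code n QE \<subseteq> code n E"
  proof
    fix c assume "c \<in> code n QE"
    then obtain vs where "is_cycle n QE vs c" unfolding code_def by blast
    then show "c \<in> code n E" using quotient_cycle_lifts twisted_code by blast
  qed
  show "code n E \<subseteq> code n QE"
    unfolding code_def using cycle_collapses by blast
qed

text \<open>The collapse identifies \<open>v\<close> and \<open>w\<close>, so \<open>V i\<close> strictly shrinks.\<close>
lemma quotient_smaller: "smaller n QV V"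
  unfolding smaller_def
proof (intro conjI)
  show "\<forall>j<n. card (QV j) \<le> card (V j)" using QV_subset finite_V by (simp add: card_mono)
  have "add i w (sm i 1 delta) = v"
    using Vi.scale_one delta_in Vi.plus_minus_cancel v w unfolding delta_def by simp
  then have "v \<in> Vi.line_coset delta w" unfolding Vi.line_coset_def by (metis (mono_tags) mem_Collect_eq)
  then have "collapse v = collapse w" using qrep_eq w v collapse_Vi by simp
  then have "\<not> inj_on collapse (V i)" using v w v_ne_w unfolding inj_on_def by blast
  then have "card (QV i) \<noteq> card (V i)"
    using inj_on_iff_eq_card[OF finite_V[OF i]] unfolding QV_def by blast
  then show "\<exists>j<n. card (QV j) < card (V j)"
    using QV_subset[OF i] finite_V[OF i] card_mono i le_neq_implies_less by metis
qed

text \<open>The collapse is reached by merging each non-representative vertex of \<open>V i\<close> into its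
  representative.\<close>
lemma merges_to_quotient: "(merge_step n)\<^sup>*\<^sup>* (V, E) (QV, QE)"
proof -
  define S where "S = V i - qrep ` V i"
  have redirect: "(\<lambda>x. if x \<in> S then qrep x else x) = collapse"
  proof
    fix x
    have "qrep x = x" if "x \<in> qrep ` V i"
      using that Vi.rep_idem delta_in unfolding qrep_def by blast
    then show "(if x \<in> S then qrep x else x) = collapse x"
      unfolding S_def collapse_def by auto
  qed
  have "(merge_step n)\<^sup>*\<^sup>* (V, E) (\<lambda>j. (\<lambda>x. if x \<in> S then qrep x else x) ` V j,
          \<lambda>j. map_edge (\<lambda>x. if x \<in> S then qrep x else x) ` E j)"
    by (rule merge_steps_redirect[OF i]) (use qrep_closed finite_V[OF i] in \<open>auto simp: S_def\<close>)
  then show ?thesis unfolding redirect QV_def QE_def .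
qed

end

theorem mainTheorem12:
  fixes n :: nat
    and V :: "nat \<Rightarrow> 'v set"
    and E :: "nat \<Rightarrow> ('v \<times> 'a::{field,finite} \<times> 'v) set"
  assumes "linear_trellis n V E"
    and "almost_reduced n V E"
    and "mergeable n V E"
  shows "\<exists>V' E'. (merge_step n)\<^sup>*\<^sup>* (V, E) (V', E')
           \<and> linear_trellis n V' E' \<and> code n E' = code n E \<and> smaller n V' V"
proof -
  from assms(1) obtain add sm z where tr: "trellis n V E" and L: "\<forall>j<n. vs_on (V j) (add j) (sm j) (z j)
          \<and> (z j, 0, z (Suc j mod n)) \<in> E j
          \<and> (\<forall>x a y x' a' y'. (x, a, y) \<in> E j \<longrightarrow> (x', a', y') \<in> E j \<longrightarrow>
                (add j x x', a + a', add (Suc j mod n) y y') \<in> E j)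
          \<and> (\<forall>c x a y. (x, a, y) \<in> E j \<longrightarrow> (sm j c x, c * a, sm (Suc j mod n) c y) \<in> E j)"
    unfolding linear_trellis_def by blast
  from assms(3) obtain i v w where "i < n" "v \<in> V i" "w \<in> V i" "v \<noteq> w"
    "code n (snd (merge_vertices V E v w)) = code n E"
    unfolding mergeable_def by blast
  then interpret mergeable_linear_trellis n V E add sm z i v w
    using tr L assms(2) by unfold_locales blast+
  show ?thesis
    using merges_to_quotient quotient_linear quotient_code quotient_smaller by blast
qed

end
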